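(* Consider a SOCO problem with a one-dimensional decision space and a norm $\|\cdot\|$ on $\mathbb{R}$. Let $\theta\ge1$ and let $N$ be the norm on $\mathbb{R}$ with $N(1)=\theta\|1\|$ (i.e. $N(x)=\theta\|x\|$). Then the algorithm RBG($N$) attains $\alpha$-unfair competitive ratio $CR_1^\alpha$ at most $(1+\theta)/\min\{\theta,\alpha\}$ (for every $\alpha\ge1$) and regret $R'_0$ of $O(\max\{T/\theta,\theta\})$.
   Context: Setting: the decision space is a compact interval $F=[x_L,x_H]\subseteq\mathbb{R}^+$, $\|\cdot\|$ is a norm on $\mathbb{R}$, and the cost functions $c^t:F\to\mathbb{R}^+$ are convex with subgradients uniformly bounded over the sequence, and bounded above by a constant independent of $T$. An online (possibly randomized) algorithm produces $x^1,x^2,\dots\in F$ with $x^s$ depending only on $c^1,\dots,c^{s-1}$ and internal randomness. For $\alpha\ge0$ and lookahead $i$, $C_i^\alpha(A)=\mathbb{E}\big[\sum_{t=1}^T c^t(x^{t+i})+\alpha\|x^{t+i}-x^{t+i-1}\|\big]$ with initial action $x^i=0$; $C_i=C_i^1$. $OPT_s=\min_{x\in F}\sum_{t=1}^T c^t(x)$; $OPT_d^\alpha=\min_{x\in F^T}\sum_{t=1}^T c^t(x^t)+\alpha\|x^t-x^{t-1}\|$ with $x^0=0$. The regret $R'_0(A)$ is (at most) $\rho(T)$ if $C_0^1(A)-OPT_s\le\rho(T)$ for every cost sequence; the $\alpha$-unfair competitive ratio $CR_1^\alpha(A)$ is (at most) $\rho$ if $C_1(A)\le\rho\,OPT_d^\alpha+O(1)$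 for every cost sequence. Algorithm RBG($N$) (Randomly Biased Greedy): define the work function $w^0(x)=N(x)$ and $w^t(x)=\min_{y\in F}\{w^{t-1}(y)+c^t(y)+N(x-y)\}$ for $x\in F$; draw a single random number $r$ uniformly from $(-1,1)$; at each time step $t$, choose $x^t\in F$ minimizing $Y^t(x)=w^{t-1}(x)+rN(x)$. *)

theory Defs
  imports "HOL-Analysis.Analysis"
begin

definition is_norm_real :: "(real \<Rightarrow> real) \<Rightarrow> bool" where
  "is_norm_real nrm \<longleftrightarrow>
     (\<forall>x. 0 \<le> nrm x) \<and> (\<forall>x. nrm x = 0 \<longleftrightarrow> x = 0) \<and>
     (\<forall>a x. nrm (a * x) = \<bar>a\<bar> * nrm x) \<and>
     (\<forall>x y. nrm (x + y) \<le> nrm x + nrm y)"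

definition is_subgradient :: "real set \<Rightarrow> (real \<Rightarrow> real) \<Rightarrow> real \<Rightarrow> real \<Rightarrow> bool" where
  "is_subgradient F f x g \<longleftrightarrow> (\<forall>y\<in>F. f x + g * (y - x) \<le> f y)"

text \<open>Admissible cost sequence on F = [xL, xH]: convex, nonnegative, bounded above by B,
  with subgradients bounded by G (uniformly in t). Costs are indexed by t = 1, 2, ...\<close>
definition soco_costs :: "real \<Rightarrow> real \<Rightarrow> real \<Rightarrow> real \<Rightarrow> (nat \<Rightarrow> real \<Rightarrow> real) \<Rightarrow> bool" where
  "soco_costs xL xH G B c \<longleftrightarrow>
     (\<forall>t. convex_on {xL..xH} (c t) \<and>
          (\<forall>x\<in>{xL..xH}. 0 \<le> c t x \<and> c t x \<le> B) \<and>
          (\<forall>x\<in>{xL..xH}. \<exists>g. \<bar>g\<bar> \<le> G \<and> is_subgradient {xL..xH} (c t) x g))"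

primrec rbg_work :: "(real \<Rightarrow> real) \<Rightarrow> real set \<Rightarrow> (nat \<Rightarrow> real \<Rightarrow> real) \<Rightarrow> nat \<Rightarrow> real \<Rightarrow> real" where
  "rbg_work N F c 0 = (\<lambda>x. N x)"
| "rbg_work N F c (Suc t) =
     (\<lambda>x. Inf ((\<lambda>y. rbg_work N F c t y + c (Suc t) y + N (x - y)) ` F))"

definition rbg_run :: "(real \<Rightarrow> real) \<Rightarrow> real set \<Rightarrow> (nat \<Rightarrow> real \<Rightarrow> real) \<Rightarrow> (real \<Rightarrow> nat \<Rightarrow> real) \<Rightarrow> bool" where
  "rbg_run N F c x \<longleftrightarrow>
     (\<forall>r\<in>{-1<..<1}. \<forall>t\<ge>1. x r t \<in> F \<and>
        (\<forall>z\<in>F. rbg_work N F c (t - 1) (x r t) + r * N (x r t)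
               \<le> rbg_work N F c (t - 1) z + r * N z))"

definition expect_r :: "(real \<Rightarrow> real) \<Rightarrow> real" where
  "expect_r f = integral\<^sup>L (uniform_measure lborel {-1<..<1}) f"

text \<open>Cost C_i^alpha with lookahead i in {0,1}; the action before x^{1+i} is the initial action 0.\<close>
definition cost_la :: "nat \<Rightarrow> real \<Rightarrow> (real \<Rightarrow> real) \<Rightarrow> (nat \<Rightarrow> real \<Rightarrow> real) \<Rightarrow> nat \<Rightarrow> (real \<Rightarrow> nat \<Rightarrow> real) \<Rightarrow> real" where
  "cost_la i \<alpha> nrm c T x = expect_r (\<lambda>r.
     \<Sum>t=1..T. c t (x r (t + i)) + \<alpha> * nrm (x r (t + i) - (if t = 1 then 0 else x r (t + i - 1))))"

definition OPT_s :: "real set \<Rightarrow> (nat \<Rightarrow> real \<Rightarrow> real) \<Rightarrow> nat \<Rightarrow> real" where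
  "OPT_s F c T = Inf ((\<lambda>x. \<Sum>t=1..T. c t x) ` F)"

definition OPT_d :: "real \<Rightarrow> (real \<Rightarrow> real) \<Rightarrow> real set \<Rightarrow> (nat \<Rightarrow> real \<Rightarrow> real) \<Rightarrow> nat \<Rightarrow> real" where
  "OPT_d \<alpha> nrm F c T = Inf {(\<Sum>t=1..T. c t (y t) + \<alpha> * nrm (y t - y (t - 1))) | y.
                                y 0 = 0 \<and> (\<forall>t\<in>{1..T}. y t \<in> F)}"

end

(*
  Put s = N(1) = \<theta>\<parallel>1\<parallel>, so that N(z) = s|z|. On F \<subseteq> \<real>\<^sup>+ the RBG action x\<^sup>t(r) is a minimiser of
  the tilted objective w\<^sup>t\<^sup>-\<^sup>1(z) + r s z, and all work functions are convex and s-Lipschitz.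

  Hitting cost: since |r| < 1, at the new minimiser w\<^sup>t coincides with w\<^sup>t\<^sup>-\<^sup>1 + c\<^sup>t (moving costs
  s per unit but gains at most |r| s). Hence the minimum of the tilted objective grows by at least
  c\<^sup>t(x\<^sup>t\<^sup>+\<^sup>1) per step, and the total hitting cost is at most w\<^sup>T(x\<^sub>L) + s x\<^sub>H.

  Movement cost: the minimiser is antitone in r and, by the envelope theorem, its integral over
  r \<in> [-1, 1] is a difference of minimum values at r = \<plusminus>1. As w\<^sup>t - w\<^sup>t\<^sup>-\<^sup>1 is quasiconvex, the
  minimisers for w\<^sup>t\<^sup>-\<^sup>1 and w\<^sup>t are ordered on either side of its valley for almost every r. This
  bounds E|x\<^sup>t\<^sup>+\<^sup>1 - x\<^sup>t| by the increase of w at the two endpoints divided by 2s, which telescopes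
  to (w\<^sup>T(x\<^sub>L) + w\<^sup>T(x\<^sub>H)) / 2s.

  Finally w\<^sup>T is bounded by the N-cost of any path, and (1 + 1/\<theta>) times the N-cost of a path is at
  most (1 + \<theta>) / min \<theta> \<alpha> times its \<alpha>-cost. For the regret, compare with a static path and use
  the Lipschitz bound on c\<^sup>t to remove the lookahead.
*)

theory Submission
  imports Defs
begin

section \<open>Minimisers of tilted objectives\<close>

definition tilted_argmin :: "(real \<Rightarrow> real) \<Rightarrow> real set \<Rightarrow> real \<Rightarrow> real \<Rightarrow> bool" where
  "tilted_argmin \<phi> S k z \<longleftrightarrow> z \<in> S \<and> (\<forall>w\<in>S. \<phi> z + k * z \<le> \<phi> w + k * w)"

lemma tilted_argmin_antimono:
  assumes "tilted_argmin \<phi> S k1 z1" "tilted_argmin \<phi> S k2 z2" "k1 < k2"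
  shows "z2 \<le> z1"
proof (rule ccontr)
  assume "\<not> z2 \<le> z1"
  moreover have "\<phi> z1 + k1 * z1 \<le> \<phi> z2 + k1 * z2" "\<phi> z2 + k2 * z2 \<le> \<phi> z1 + k2 * z1"
    using assms unfolding tilted_argmin_def by auto
  then have "(k2 - k1) * (z2 - z1) \<le> 0" by (simp add: algebra_simps)
  ultimately show False using \<open>k1 < k2\<close> by (simp add: mult_le_0_iff)
qed

text \<open>Between a point and a minimiser of a convex tilted objective the objective is no larger
  than at the point, so clamping a minimiser to a subinterval yields a minimiser there.\<close>
lemma tilted_argmin_clamp:
  assumes \<phi>: "convex_on {a..b} \<phi>" and v: "v \<in> {a..b}" and z: "tilted_argmin \<phi> {a..b} k z"
  shows "tilted_argmin \<phi> {a..v} k (min z v)" "tilted_argmin \<phi> {v..b} k (max z v)"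
proof -
  let ?\<psi> = "\<lambda>x. \<phi> x + k * x"
  have zab: "z \<in> {a..b}" and zmin: "\<And>w. w \<in> {a..b} \<Longrightarrow> ?\<psi> z \<le> ?\<psi> w"
    using z unfolding tilted_argmin_def by auto
  have between: "?\<psi> x \<le> ?\<psi> w"
    if w: "w \<in> {a..b}" and x: "x \<in> closed_segment w z" for w x
  proof -
    obtain t where t: "0 \<le> t" "t \<le> 1" and xt: "x = (1 - t) *\<^sub>R w + t *\<^sub>R z"
      using x unfolding closed_segment_def by auto
    have "\<phi> x \<le> (1 - t) * \<phi> w + t * \<phi> z"
      using convex_onD[OF \<phi> t w zab] xt by simp
    moreover have "k * x = (1 - t) * (k * w) + t * (k * z)"
      unfolding xt by (simp add: algebra_simps)
    ultimately have "?\<psi> x \<le> (1 - t) * ?\<psi> w + t * ?\<psi> z"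
      by (simp add: algebra_simps)
    also have "\<dots> \<le> (1 - t) * ?\<psi> w + t * ?\<psi> w"
      using zmin[OF w] t by (intro add_left_mono mult_left_mono) auto
    finally show ?thesis by (simp add: algebra_simps)
  qed
  show "tilted_argmin \<phi> {a..v} k (min z v)" "tilted_argmin \<phi> {v..b} k (max z v)"
    unfolding tilted_argmin_def
    using zab v zmin between by (auto simp: min_def max_def closed_segment_eq_real_ivl)
qed

section \<open>An envelope theorem\<close>

context
  fixes X M :: "real \<Rightarrow> real" and p q :: real
  assumes antimono: "antimono_on {p..q} X"
    and supergradient: "\<And>r1 r2. r1 \<in> {p..q} \<Longrightarrow> r2 \<in> {p..q} \<Longrightarrow> M r2 \<le> M r1 + (r2 - r1) * X r1"
begin

lemma antimono_integrable_on: "X integrable_on {p..q}"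
proof -
  have "mono_on {p..q} (\<lambda>r. - X r)"
    using antimono by (auto simp: monotone_on_def)
  then show ?thesis
    using integrable_neg_iff integrable_on_mono_on by blast
qed

lemma integral_supergradient_error:
  assumes "p \<le> u" "u \<le> w" "w \<le> q"
  shows "\<bar>integral {u..w} X - (M w - M u)\<bar> \<le> (w - u) * (X u - X w)"
proof -
  have X_uw: "X integrable_on {u..w}"
    using integrable_on_subinterval[OF antimono_integrable_on] assms by auto
  have X_bounds: "X w \<le> X r" "X r \<le> X u" if "r \<in> {u..w}" for r
    using monotone_onD[OF antimono] that assms by auto
  have "integral {u..w} X \<le> integral {u..w} (\<lambda>_. X u)"
    by (rule integral_le[OF X_uw]) (use X_bounds in auto)
  moreover have "integral {u..w} (\<lambda>_. X w) \<le> integral {u..w} X"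
    by (rule integral_le[OF _ X_uw]) (use X_bounds in auto)
  moreover have "integral {u..w} (\<lambda>_. X u) = (w - u) * X u" "integral {u..w} (\<lambda>_. X w) = (w - u) * X w"
    using assms by simp_all
  moreover have "M w - M u \<le> (w - u) * X u" "(w - u) * X w \<le> M w - M u"
    using supergradient[of u w] supergradient[of w u] assms by (auto simp: algebra_simps)
  moreover have "(w - u) * (X u - X w) = (w - u) * X u - (w - u) * X w"
    by (simp add: algebra_simps)
  ultimately show ?thesis by (simp only: abs_le_iff) linarith
qed

text \<open>Summing the error over the uniform partition of \<open>[p, q]\<close> into \<open>n\<close> pieces telescopes.\<close>
lemma integral_supergradient_error_partition:
  assumes "p \<le> q" "n > 0"
  shows "\<bar>integral {p..q} X - (M q - M p)\<bar> \<le> (q - p) * (X p - X q) / real n"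
proof -
  define d where "d = (q - p) / real n"
  have d: "d \<ge> 0" "p + real n * d = q" using assms unfolding d_def by auto
  have partial: "\<bar>integral {p..p + real k * d} X - (M (p + real k * d) - M p)\<bar> \<le> d * (X p - X (p + real k * d))"
    if "k \<le> n" for k
    using that
  proof (induction k)
    case (Suc k)
    define u where "u = p + real k * d"
    define w where "w = p + real (Suc k) * d"
    have "real (Suc k) * d \<le> real n * d" using Suc.prems d by (intro mult_right_mono) auto
    then have uw: "p \<le> u" "u \<le> w" "w \<le> q" "w - u = d"
      using d unfolding u_def w_def by (simp_all add: distrib_right)
    have "integral {p..u} X + integral {u..w} X = integral {p..w} X"
      by (rule Henstock_Kurzweil_Integration.integral_combine[OF uw(1,2)])
        (rule integrable_on_subinterval[OF antimono_integrable_on], use uw in auto)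
    moreover have "\<bar>integral {p..u} X - (M u - M p)\<bar> \<le> d * (X p - X u)"
      using Suc unfolding u_def by simp
    moreover have "\<bar>integral {u..w} X - (M w - M u)\<bar> \<le> d * (X u - X w)"
      using integral_supergradient_error[OF uw(1-3)] uw(4) by simp
    moreover have "d * (X p - X u) + d * (X u - X w) = d * (X p - X w)"
      by (simp add: algebra_simps)
    ultimately have "\<bar>integral {p..w} X - (M w - M p)\<bar> \<le> d * (X p - X w)"
      by (simp only: abs_le_iff) linarith
    then show ?case unfolding w_def .
  qed simp
  from partial[of n] have "\<bar>integral {p..q} X - (M q - M p)\<bar> \<le> d * (X p - X q)"
    unfolding d(2) by simp
  also have "\<dots> = (q - p) * (X p - X q) / real n"
    unfolding d_def by simp
  finally show ?thesis .
qed

text \<open>An envelope-theorem form of the fundamental theorem of calculus: \<open>X\<close> is a supergradient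
  of the concave function \<open>M\<close>, hence its integral is the increment of \<open>M\<close>.\<close>
lemma has_integral_supergradient:
  assumes "p \<le> q"
  shows "(X has_integral (M q - M p)) {p..q}"
proof -
  define C where "C = (q - p) * (X p - X q)"
  have "0 \<le> C"
    unfolding C_def using assms monotone_onD[OF antimono, of p q] by simp
  have "\<bar>integral {p..q} X - (M q - M p)\<bar> \<le> 0"
  proof (rule field_le_epsilon)
    fix \<epsilon> :: real assume "\<epsilon> > 0"
    obtain n :: nat where n: "C / \<epsilon> < real n"
      using reals_Archimedean2 by blast
    have "0 \<le> C / \<epsilon>" using \<open>0 \<le> C\<close> \<open>\<epsilon> > 0\<close> by simp
    with n have "n > 0" by simp
    have "C < \<epsilon> * real n"
      using n \<open>\<epsilon> > 0\<close> by (simp add: divide_less_eq mult.commute)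
    then have "C / real n < \<epsilon>"
      using \<open>n > 0\<close> by (simp add: divide_less_eq)
    moreover have "\<bar>integral {p..q} X - (M q - M p)\<bar> \<le> C / real n"
      unfolding C_def by (rule integral_supergradient_error_partition[OF assms \<open>n > 0\<close>])
    ultimately show "\<bar>integral {p..q} X - (M q - M p)\<bar> \<le> 0 + \<epsilon>" by simp
  qed
  then have "integral {p..q} X = M q - M p" by simp
  with antimono_integrable_on show ?thesis by (simp add: has_integral_integrable_integral)
qed

end

lemma tilted_argmin_endpoints:
  assumes "p \<le> q" "s-lipschitz_on {p..q} \<phi>"
  shows "tilted_argmin \<phi> {p..q} (- s) q" "tilted_argmin \<phi> {p..q} s p"
proof -
  have "\<phi> z \<le> \<phi> w + s * \<bar>z - w\<bar>" if "w \<in> {p..q}" "z \<in> {p..q}" for w z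
    using lipschitz_on_normD[OF assms(2) that(2,1)] by simp
  then have "\<phi> q \<le> \<phi> w + s * (q - w)" "\<phi> p \<le> \<phi> w + s * (w - p)" if "w \<in> {p..q}" for w
    using that assms(1) by (metis abs_of_nonneg abs_minus_commute atLeastAtMost_iff diff_ge_0_iff_ge order_refl)+
  then show "tilted_argmin \<phi> {p..q} (- s) q" "tilted_argmin \<phi> {p..q} s p"
    unfolding tilted_argmin_def using assms(1) by (auto simp: algebra_simps)
qed

text \<open>The envelope theorem for \<open>r \<mapsto> min (\<phi> + r s id)\<close>: the minimiser is antitone in \<open>r\<close> and a
  supergradient of the (concave) minimum value.\<close>
lemma has_integral_tilted_argmin:
  assumes pq: "p \<le> q" and s: "s > 0" and \<phi>: "s-lipschitz_on {p..q} \<phi>"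
    and Y: "\<And>r. r \<in> {-1<..<1} \<Longrightarrow> tilted_argmin \<phi> {p..q} (r * s) (Y r)"
  shows "(Y has_integral ((\<phi> p + s * p - \<phi> q + s * q) / s)) {-1..1}"
proof -
  define Ye where "Ye r = (if r \<le> -1 then q else if r \<ge> 1 then p else Y r)" for r
  have Ye: "tilted_argmin \<phi> {p..q} (r * s) (Ye r)" if "r \<in> {-1..1}" for r
    using that Y tilted_argmin_endpoints[OF pq \<phi>] unfolding Ye_def by auto
  define M where "M r = \<phi> (Ye r) + r * s * Ye r" for r
  have "((\<lambda>r. s * Ye r) has_integral (M 1 - M (-1))) {-1..1}"
  proof (rule has_integral_supergradient)
    show "antimono_on {-1..1} (\<lambda>r. s * Ye r)"
    proof (rule monotone_onI)
      fix r1 r2 :: real assume "r1 \<in> {-1..1}" "r2 \<in> {-1..1}" "r1 \<le> r2"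
      then show "s * Ye r2 \<le> s * Ye r1"
        using tilted_argmin_antimono[OF Ye Ye] s by (cases "r1 = r2") auto
    qed
    fix r1 r2 :: real assume "r1 \<in> {-1..1}" "r2 \<in> {-1..1}"
    then have "M r2 \<le> \<phi> (Ye r1) + r2 * s * Ye r1"
      using Ye unfolding tilted_argmin_def M_def by blast
    then show "M r2 \<le> M r1 + (r2 - r1) * (s * Ye r1)"
      unfolding M_def by (simp add: algebra_simps)
  qed simp
  then have "((\<lambda>r. (1 / s) * (s * Ye r)) has_integral ((1 / s) * (M 1 - M (-1)))) {-1..1}"
    by (rule has_integral_mult_right)
  moreover have "M 1 - M (-1) = \<phi> p + s * p - \<phi> q + s * q"
    unfolding M_def Ye_def by simp
  ultimately have "(Ye has_integral ((\<phi> p + s * p - \<phi> q + s * q) / s)) {-1..1}"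
    using s by simp
  then show ?thesis
    by (intro has_integral_spike_finite[of "{-1, 1}" _ Y Ye]) (auto simp: Ye_def)
qed

lemma countable_discontinuities_tilted_argmin:
  assumes "s > 0" and Y: "\<And>r. r \<in> {-1<..<1} \<Longrightarrow> tilted_argmin \<phi> S (r * s) (Y r)"
  shows "countable {r \<in> {-1<..<1}. \<not> isCont Y r}"
proof -
  have "mono_on {-1<..<1} (\<lambda>x. - Y x)"
  proof (rule monotone_onI)
    fix r1 r2 :: real assume "r1 \<in> {-1<..<1}" "r2 \<in> {-1<..<1}" "r1 \<le> r2"
    then show "- Y r1 \<le> - Y r2"
      using tilted_argmin_antimono[OF Y Y] \<open>s > 0\<close> by (cases "r1 = r2") auto
  qed
  then have "countable {r \<in> {-1<..<1}. \<not> isCont (\<lambda>x. - Y x) r}"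
    by (intro mono_on_ctble_discont_open) auto
  moreover have "isCont Y r \<longleftrightarrow> isCont (\<lambda>x. - Y x) r" for r
    using isCont_minus[where f = "\<lambda>x. - Y x" and a = r] isCont_minus[where f = Y and a = r] by auto
  ultimately show ?thesis by simp
qed

section \<open>Comparing minimisers of two tilted objectives\<close>

text \<open>If \<open>g - f\<close> decreases, a minimiser \<open>z\<close> of \<open>g + k id\<close> left of the minimiser of \<open>f + k id\<close> also
  minimises \<open>f + k id\<close>; by monotonicity in the slope this forces a jump of the latter at \<open>k\<close>.\<close>
lemma tilted_argmin_le_of_antimono_diff:
  assumes s: "s > 0" and diff: "antimono_on S (\<lambda>x. g x - f x)"
    and Yf: "\<And>r. r \<in> {-1<..<1} \<Longrightarrow> tilted_argmin f S (r * s) (Yf r)"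
    and Yg: "\<And>r. r \<in> {-1<..<1} \<Longrightarrow> tilted_argmin g S (r * s) (Yg r)"
    and r: "r \<in> {-1<..<1}" and cont: "isCont Yf r"
  shows "Yf r \<le> Yg r"
proof (rule ccontr)
  assume "\<not> Yf r \<le> Yg r"
  then have lt: "Yg r < Yf r" by simp
  have S: "Yg r \<in> S" "Yf r \<in> S"
    using Yf[OF r] Yg[OF r] unfolding tilted_argmin_def by auto
  have "g (Yg r) + r * s * Yg r \<le> g (Yf r) + r * s * Yf r"
    using Yg[OF r] S unfolding tilted_argmin_def by blast
  moreover have "g (Yf r) - f (Yf r) \<le> g (Yg r) - f (Yg r)"
    using monotone_onD[OF diff S] lt by simp
  ultimately have "tilted_argmin f S (r * s) (Yg r)"
    using Yf[OF r] S unfolding tilted_argmin_def by fastforce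
  moreover have "eventually (\<lambda>r'. Yg r < Yf r') (at_right r)"
    using cont lt unfolding isCont_def by (auto dest: filterlim_at_split[THEN iffD1] order_tendstoD(1))
  moreover have "eventually (\<lambda>r'. r' \<in> {r<..<1}) (at_right r)"
    using r by (intro eventually_at_right_real) auto
  ultimately obtain r' where Yg: "tilted_argmin f S (r * s) (Yg r)" and "Yg r < Yf r'" "r' \<in> {r<..<1}"
    using eventually_happens'[OF trivial_limit_at_right_real] eventually_conj by blast
  moreover have "Yf r' \<le> Yg r"
    by (rule tilted_argmin_antimono[OF Yg Yf]) (use r \<open>r' \<in> {r<..<1}\<close> s in auto)
  ultimately show False by simp
qed

lemma tilted_argmin_ge_of_mono_diff:
  assumes s: "s > 0" and diff: "mono_on S (\<lambda>x. g x - f x)"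
    and Yf: "\<And>r. r \<in> {-1<..<1} \<Longrightarrow> tilted_argmin f S (r * s) (Yf r)"
    and Yg: "\<And>r. r \<in> {-1<..<1} \<Longrightarrow> tilted_argmin g S (r * s) (Yg r)"
    and r: "r \<in> {-1<..<1}" and cont: "isCont Yf r"
  shows "Yg r \<le> Yf r"
proof (rule ccontr)
  assume "\<not> Yg r \<le> Yf r"
  then have lt: "Yf r < Yg r" by simp
  have S: "Yg r \<in> S" "Yf r \<in> S"
    using Yf[OF r] Yg[OF r] unfolding tilted_argmin_def by auto
  have "g (Yg r) + r * s * Yg r \<le> g (Yf r) + r * s * Yf r"
    using Yg[OF r] S unfolding tilted_argmin_def by blast
  moreover have "g (Yf r) - f (Yf r) \<le> g (Yg r) - f (Yg r)"
    using monotone_onD[OF diff S(2,1)] lt by simp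
  ultimately have "tilted_argmin f S (r * s) (Yg r)"
    using Yf[OF r] S unfolding tilted_argmin_def by fastforce
  moreover have "eventually (\<lambda>r'. Yf r' < Yg r) (at_left r)"
    using cont lt unfolding isCont_def by (auto dest: filterlim_at_split[THEN iffD1] order_tendstoD(2))
  moreover have "eventually (\<lambda>r'. r' \<in> {-1<..<r}) (at_left r)"
    using r by (intro eventually_at_left_real) auto
  ultimately obtain r' where Yg: "tilted_argmin f S (r * s) (Yg r)" and "Yf r' < Yg r" "r' \<in> {-1<..<r}"
    using eventually_happens'[OF trivial_limit_at_left_real] eventually_conj by blast
  moreover have "Yg r \<le> Yf r'"
    by (rule tilted_argmin_antimono[OF Yf Yg]) (use r \<open>r' \<in> {-1<..<r}\<close> s in auto)
  ultimately show False by simp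
qed

text \<open>Splitting at the valley \<open>v\<close> of \<open>g - f\<close>, the two minimisers are ordered on either side of \<open>v\<close>
  (except on the countably many \<open>r\<close> where one of them jumps), so the distance between them is a
  difference of clamped minimisers, whose integrals are given by the envelope theorem.\<close>
lemma has_integral_tilted_argmin_distance:
  assumes s: "s > 0"
    and f: "s-lipschitz_on {a..b} f" "convex_on {a..b} f"
    and g: "s-lipschitz_on {a..b} g" "convex_on {a..b} g"
    and fg: "f v \<le> g v" and v: "v \<in> {a..b}"
    and left: "antimono_on {a..v} (\<lambda>x. g x - f x)" and right: "mono_on {v..b} (\<lambda>x. g x - f x)"
    and Xf: "\<And>r. r \<in> {-1<..<1} \<Longrightarrow> tilted_argmin f {a..b} (r * s) (Xf r)"
    and Xg: "\<And>r. r \<in> {-1<..<1} \<Longrightarrow> tilted_argmin g {a..b} (r * s) (Xg r)"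
  obtains I where "((\<lambda>r. \<bar>Xg r - Xf r\<bar>) has_integral I) {-1..1}" "I \<le> (g a - f a + g b - f b) / s"
proof -
  have av: "a \<le> v" and vb: "v \<le> b" using v by auto
  have f_left: "s-lipschitz_on {a..v} f" and f_right: "s-lipschitz_on {v..b} f"
    and g_left: "s-lipschitz_on {a..v} g" and g_right: "s-lipschitz_on {v..b} g"
    using lipschitz_on_subset[OF f(1)] lipschitz_on_subset[OF g(1)] v by auto
  have Xf_clamp: "tilted_argmin f {a..v} (r * s) (min (Xf r) v)" "tilted_argmin f {v..b} (r * s) (max (Xf r) v)"
    if "r \<in> {-1<..<1}" for r
    using tilted_argmin_clamp[OF f(2) v Xf[OF that]] by auto
  have Xg_clamp: "tilted_argmin g {a..v} (r * s) (min (Xg r) v)" "tilted_argmin g {v..b} (r * s) (max (Xg r) v)"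
    if "r \<in> {-1<..<1}" for r
    using tilted_argmin_clamp[OF g(2) v Xg[OF that]] by auto
  define I where "I = ((g a + s * a - g v + s * v) / s - (f a + s * a - f v + s * v) / s)
      + ((f v + s * v - f b + s * b) / s - (g v + s * v - g b + s * b) / s)"
  have clamped: "((\<lambda>r. (min (Xg r) v - min (Xf r) v) + (max (Xf r) v - max (Xg r) v)) has_integral I) {-1..1}"
    unfolding I_def
    by (intro has_integral_add has_integral_diff has_integral_tilted_argmin[OF _ s]
        av vb f_left f_right g_left g_right Xf_clamp Xg_clamp)
  define D where "D = {r \<in> {-1<..<1}. \<not> isCont (\<lambda>r. min (Xf r) v) r}
      \<union> {r \<in> {-1<..<1}. \<not> isCont (\<lambda>r. max (Xf r) v) r} \<union> {-1, 1}"
  have "countable D"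
    unfolding D_def
    using countable_discontinuities_tilted_argmin[OF s Xf_clamp(1)]
      countable_discontinuities_tilted_argmin[OF s Xf_clamp(2)] by auto
  then have "negligible (\<Union>r\<in>D. {r})"
    by (intro negligible_countable_Union) auto
  then have "negligible D" by simp
  moreover have "\<bar>Xg r - Xf r\<bar> = (min (Xg r) v - min (Xf r) v) + (max (Xf r) v - max (Xg r) v)"
    if r: "r \<in> {-1..1} - D" for r
  proof -
    have r': "r \<in> {-1<..<1}" "isCont (\<lambda>r. min (Xf r) v) r" "isCont (\<lambda>r. max (Xf r) v) r"
      using r unfolding D_def by auto
    have "min (Xf r) v \<le> min (Xg r) v"
      by (rule tilted_argmin_le_of_antimono_diff[OF s left Xf_clamp(1) Xg_clamp(1)]) (use r' in auto)
    moreover have "max (Xg r) v \<le> max (Xf r) v"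
      by (rule tilted_argmin_ge_of_mono_diff[OF s right Xf_clamp(2) Xg_clamp(2)]) (use r' in auto)
    ultimately show ?thesis by (cases "Xf r \<le> v"; cases "Xg r \<le> v") (simp_all add: min_def max_def abs_if)
  qed
  ultimately have "((\<lambda>r. \<bar>Xg r - Xf r\<bar>) has_integral I) {-1..1}"
    by (rule has_integral_spike[OF _ _ clamped])
  moreover have "I = (g a - f a + g b - f b - 2 * (g v - f v)) / s"
    unfolding I_def using s by (simp add: field_simps)
  then have "I \<le> (g a - f a + g b - f b) / s"
    using fg s by (simp add: divide_right_mono)
  ultimately show ?thesis by (rule that)
qed

section \<open>One step of the work-function recursion\<close>

text \<open>With \<open>f = w\<^sup>t\<^sup>-\<^sup>1\<close> and \<open>c = c\<^sup>t\<close>, \<open>conv\<close> is the next work function \<open>w\<^sup>t\<close>.\<close>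
locale inf_convolution =
  fixes a b s :: real and f c :: "real \<Rightarrow> real"
  assumes le: "a \<le> b" and s_pos: "0 < s"
    and f_lipschitz: "s-lipschitz_on {a..b} f" and f_convex: "convex_on {a..b} f"
    and c_continuous: "continuous_on {a..b} c" and c_convex: "convex_on {a..b} c"
    and c_nonneg: "\<And>x. x \<in> {a..b} \<Longrightarrow> 0 \<le> c x"
begin

definition conv :: "real \<Rightarrow> real" where
  "conv x = Inf ((\<lambda>y. f y + c y + s * \<bar>x - y\<bar>) ` {a..b})"

lemma f_dist: "x \<in> {a..b} \<Longrightarrow> y \<in> {a..b} \<Longrightarrow> \<bar>f x - f y\<bar> \<le> s * \<bar>x - y\<bar>"
  using lipschitz_on_normD[OF f_lipschitz] by simp

lemma conv_attained:
  obtains y where "y \<in> {a..b}" "conv x = f y + c y + s * \<bar>x - y\<bar>"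
    and "\<And>z. z \<in> {a..b} \<Longrightarrow> conv x \<le> f z + c z + s * \<bar>x - z\<bar>"
proof -
  have cont: "continuous_on {a..b} (\<lambda>y. f y + c y + s * \<bar>x - y\<bar>)"
    using lipschitz_on_continuous_on[OF f_lipschitz] c_continuous by (intro continuous_intros)
  then obtain y where y: "y \<in> {a..b}"
    and min: "\<forall>z\<in>{a..b}. f y + c y + s * \<bar>x - y\<bar> \<le> f z + c z + s * \<bar>x - z\<bar>"
    using continuous_attains_inf[OF compact_Icc _ cont] le by auto
  have "conv x = f y + c y + s * \<bar>x - y\<bar>"
    unfolding conv_def by (rule cInf_eq_minimum) (use y min in auto)
  with y min that show ?thesis by auto
qed

lemma conv_le: "y \<in> {a..b} \<Longrightarrow> conv x \<le> f y + c y + s * \<bar>x - y\<bar>"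
  by (rule conv_attained[of x]) auto

lemma conv_le_sum: "x \<in> {a..b} \<Longrightarrow> conv x \<le> f x + c x"
  using conv_le[of x x] by simp

lemma conv_ge: "x \<in> {a..b} \<Longrightarrow> f x \<le> conv x"
  by (rule conv_attained[of x]) (use f_dist c_nonneg in fastforce)

lemma lipschitz_on_conv: "s-lipschitz_on {a..b} conv"
proof (rule lipschitz_onI)
  have *: "conv x \<le> conv x' + s * \<bar>x - x'\<bar>" for x x'
  proof -
    obtain y where y: "y \<in> {a..b}" "conv x' = f y + c y + s * \<bar>x' - y\<bar>"
      by (rule conv_attained[of x'])
    have "conv x \<le> f y + c y + s * \<bar>x - y\<bar>" by (rule conv_le[OF y(1)])
    moreover have "s * \<bar>x - y\<bar> \<le> s * \<bar>x' - y\<bar> + s * \<bar>x - x'\<bar>"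
      using s_pos by (simp flip: distrib_left)
    ultimately show ?thesis using y by linarith
  qed
  fix x y show "dist (conv x) (conv y) \<le> s * dist x y"
    using *[of x y] *[of y x] by (simp add: dist_real_def abs_minus_commute)
qed (use s_pos in simp)

lemma convex_on_conv: "convex_on {a..b} conv"
proof (rule convex_onI)
  fix t x1 x2 :: real assume t: "0 < t" "t < 1" and x: "x1 \<in> {a..b}" "x2 \<in> {a..b}"
  obtain y1 where y1: "y1 \<in> {a..b}" "conv x1 = f y1 + c y1 + s * \<bar>x1 - y1\<bar>"
    by (rule conv_attained[of x1])
  obtain y2 where y2: "y2 \<in> {a..b}" "conv x2 = f y2 + c y2 + s * \<bar>x2 - y2\<bar>"
    by (rule conv_attained[of x2])
  define y where "y = (1 - t) * y1 + t * y2"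
  have "y \<in> {a..b}"
    using convexD[OF convex_real_interval(5) y1(1) y2(1), of "1 - t" t] t unfolding y_def by simp
  then have "conv ((1 - t) * x1 + t * x2) \<le> f y + c y + s * \<bar>(1 - t) * x1 + t * x2 - y\<bar>"
    by (rule conv_le)
  also have "f y \<le> (1 - t) * f y1 + t * f y2"
    using convex_onD[OF f_convex, of t y1 y2] t y1 y2 unfolding y_def by simp
  also have "c y \<le> (1 - t) * c y1 + t * c y2"
    using convex_onD[OF c_convex, of t y1 y2] t y1 y2 unfolding y_def by simp
  also have "\<bar>(1 - t) * x1 + t * x2 - y\<bar> \<le> (1 - t) * \<bar>x1 - y1\<bar> + t * \<bar>x2 - y2\<bar>"
  proof -
    have "(1 - t) * x1 + t * x2 - y = (1 - t) * (x1 - y1) + t * (x2 - y2)"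
      unfolding y_def by algebra
    then show ?thesis
      using abs_triangle_ineq[of "(1 - t) * (x1 - y1)" "t * (x2 - y2)"] t by (simp add: abs_mult)
  qed
  then have "s * \<bar>(1 - t) * x1 + t * x2 - y\<bar> \<le> s * ((1 - t) * \<bar>x1 - y1\<bar> + t * \<bar>x2 - y2\<bar>)"
    using s_pos by (intro mult_left_mono) auto
  finally show "conv ((1 - t) *\<^sub>R x1 + t *\<^sub>R x2) \<le> (1 - t) * conv x1 + t * conv x2"
    using y1 y2 by (simp add: algebra_simps)
qed simp

text \<open>At a minimiser of the tilted objective \<open>conv + r s id\<close> with \<open>|r| < 1\<close> the infimum defining
  \<open>conv\<close> is attained without moving: any move would cost \<open>s\<close> per unit but gain only \<open>|r| s\<close>.\<close>
lemma conv_eq_at_tilted_argmin: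
  assumes r: "\<bar>r\<bar> < 1" and X: "tilted_argmin conv {a..b} (r * s) X"
  shows "conv X = f X + c X"
proof -
  obtain y where y: "y \<in> {a..b}" "conv X = f y + c y + s * \<bar>X - y\<bar>"
    by (rule conv_attained[of X])
  have "conv X + r * s * X \<le> f y + c y + r * s * y"
    using X y(1) conv_le_sum[OF y(1)] unfolding tilted_argmin_def by fastforce
  then have "s * \<bar>X - y\<bar> \<le> r * s * (y - X)"
    using y by (simp add: algebra_simps)
  also have "\<dots> \<le> \<bar>r\<bar> * s * \<bar>X - y\<bar>"
  proof -
    have "r * (y - X) \<le> \<bar>r\<bar> * \<bar>X - y\<bar>"
      using abs_ge_self[of "r * (y - X)"] by (simp add: abs_mult abs_minus_commute)
    from mult_left_mono[OF this, of s] s_pos show ?thesis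
      by (simp add: algebra_simps)
  qed
  finally have "(1 - \<bar>r\<bar>) * s * \<bar>X - y\<bar> \<le> 0"
    by (simp add: algebra_simps)
  then have "X = y"
    using r s_pos by (simp add: mult_le_0_iff)
  with y show ?thesis by simp
qed

text \<open>The increment \<open>conv - f\<close> is quasiconvex: between the two points, either the optimal move
  from one of them passes through \<open>x\<close> (and \<open>f\<close> is \<open>s\<close>-Lipschitz), or \<open>x\<close> lies between the two
  targets and convexity of \<open>c\<close> applies.\<close>
lemma increment_quasiconvex:
  assumes x: "x1 \<in> {a..b}" "x2 \<in> {a..b}" "x1 \<le> x" "x \<le> x2"
  shows "conv x - f x \<le> max (conv x1 - f x1) (conv x2 - f x2)"
proof -
  have xab: "x \<in> {a..b}" using x by auto
  obtain y1 where y1: "y1 \<in> {a..b}" "conv x1 = f y1 + c y1 + s * \<bar>x1 - y1\<bar>"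
    by (rule conv_attained[of x1])
  obtain y2 where y2: "y2 \<in> {a..b}" "conv x2 = f y2 + c y2 + s * \<bar>x2 - y2\<bar>"
    by (rule conv_attained[of x2])
  consider "x \<le> y1" | "y2 \<le> x" | "y1 < x" "x < y2" by linarith
  then show ?thesis
  proof cases
    case 1
    have "conv x \<le> f y1 + c y1 + s * \<bar>x - y1\<bar>" by (rule conv_le[OF y1(1)])
    also have "\<dots> = conv x1 - s * (x - x1)" using y1 1 x by (simp add: algebra_simps)
    finally have "conv x \<le> conv x1 - s * (x - x1)" .
    then show ?thesis using f_dist[OF x(1) xab] x by simp
  next
    case 2
    have "conv x \<le> f y2 + c y2 + s * \<bar>x - y2\<bar>" by (rule conv_le[OF y2(1)])
    also have "\<dots> = conv x2 - s * (x2 - x)" using y2 2 x by (simp add: algebra_simps)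
    finally have "conv x \<le> conv x2 - s * (x2 - x)" .
    then show ?thesis using f_dist[OF x(2) xab] x by simp
  next
    case 3
    have "convex_on {y1..y2} c"
      using convex_on_subset[OF c_convex] y1(1) y2(1) by auto
    then have "c x \<le> max (c y1) (c y2)"
      using convex_on_le_max 3 by auto
    moreover have "c y1 \<le> conv x1 - f x1" "c y2 \<le> conv x2 - f x2"
      using y1 y2 f_dist[OF x(1) y1(1)] f_dist[OF x(2) y2(1)] by linarith+
    ultimately show ?thesis using conv_le_sum[OF xab] by linarith
  qed
qed

lemma increment_valley:
  obtains v where "v \<in> {a..b}"
    "antimono_on {a..v} (\<lambda>x. conv x - f x)" "mono_on {v..b} (\<lambda>x. conv x - f x)"
proof -
  have cont: "continuous_on {a..b} (\<lambda>x. conv x - f x)"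
    using lipschitz_on_continuous_on[OF lipschitz_on_conv] lipschitz_on_continuous_on[OF f_lipschitz]
    by (intro continuous_intros)
  then obtain v where v: "v \<in> {a..b}" and min: "\<forall>y\<in>{a..b}. conv v - f v \<le> conv y - f y"
    using continuous_attains_inf[OF compact_Icc _ cont] le by auto
  show ?thesis
  proof (rule that[OF v]; intro monotone_onI)
    fix x1 x2 assume "x1 \<in> {a..v}" "x2 \<in> {a..v}" "x1 \<le> x2"
    then show "conv x2 - f x2 \<le> conv x1 - f x1"
      using increment_quasiconvex[of x1 v x2] v min by fastforce
  next
    fix x1 x2 assume "x1 \<in> {v..b}" "x2 \<in> {v..b}" "x1 \<le> x2"
    then show "conv x1 - f x1 \<le> conv x2 - f x2"
      using increment_quasiconvex[of v x2 x1] v min by fastforce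
  qed
qed

end

section \<open>Expectation over the random number\<close>

abbreviation unif :: "real measure" where
  "unif \<equiv> uniform_measure lborel {-1<..<1}"

lemma uniform_measure_unit_interval:
  "unif = density lborel (\<lambda>r. ennreal (indicator {-1<..<1} r / 2))"
proof -
  have "indicator {-1<..<1} r / ennreal 2 = ennreal (indicator {-1<..<1} r / 2)" for r :: real
    using divide_ennreal[of 1 2] by (auto simp: indicator_def)
  then show ?thesis unfolding uniform_measure_def by simp
qed

lemma expect_r_eq_integral:
  fixes f :: "real \<Rightarrow> real"
  assumes f[measurable]: "f \<in> borel_measurable borel" and bounded: "\<And>r. r \<in> {-1<..<1} \<Longrightarrow> \<bar>f r\<bar> \<le> C"
  shows "integrable unif f" "expect_r f = integral {-1..1} f / 2"
proof -
  define A :: "real set" where "A = {-1<..<1}"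
  have [measurable]: "A \<in> sets borel" unfolding A_def by simp
  have bound: "integrable lborel (\<lambda>r. \<bar>C\<bar> * indicator A r :: real)"
    unfolding A_def by (intro integrable_mult_right integrable_real_indicator) auto
  have dominated: "AE r in lborel. norm (indicator A r *\<^sub>R f r) \<le> norm (\<bar>C\<bar> * indicator A r :: real)"
    using bounded unfolding A_def by (intro AE_I2) (force simp: indicator_def)
  have fA: "integrable lborel (\<lambda>r. indicator A r *\<^sub>R f r)"
    by (rule Bochner_Integration.integrable_bound[OF bound _ dominated]) measurable
  then have "integrable lborel (\<lambda>r. (indicator A r / 2) *\<^sub>R f r)"
    using integrable_mult_left[OF fA, of "1/2"] by (simp add: algebra_simps)
  then show "integrable unif f"
    unfolding uniform_measure_unit_interval unfolding A_def[symmetric]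
    by (subst integrable_density) auto
  have "expect_r f = integral\<^sup>L lborel (\<lambda>r. (indicator A r / 2) *\<^sub>R f r)"
    unfolding expect_r_def uniform_measure_unit_interval unfolding A_def[symmetric]
    by (rule integral_density) auto
  also have "\<dots> = (LINT r:A|lborel. f r) / 2"
    unfolding set_lebesgue_integral_def by (simp add: algebra_simps)
  also have "(LINT r:A|lborel. f r) = integral A f"
    by (rule set_borel_integral_eq_integral) (use fA in \<open>simp add: set_integrable_def\<close>)
  also have "integral A f = integral {-1..1} f"
    unfolding A_def by (simp add: integral_open_interval_real)
  finally show "expect_r f = integral {-1..1} f / 2" .
qed

lemma expect_r_const: "integrable unif (\<lambda>_. K)" "expect_r (\<lambda>_. K) = K"
  using expect_r_eq_integral[of "\<lambda>_. K" "\<bar>K\<bar>"] by auto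

lemma expect_r_affine:
  assumes "integrable unif h"
  shows "integrable unif (\<lambda>r. K + k * h r)" "expect_r (\<lambda>r. K + k * h r) = K + k * expect_r h"
  using assms expect_r_const unfolding expect_r_def by auto

text \<open>No integrability of \<open>f\<close> is needed: a non-integrable \<open>f\<close> has expectation \<open>0\<close>.\<close>
lemma expect_r_le:
  assumes g: "integrable unif g"
    and le: "\<And>r. r \<in> {-1<..<1} \<Longrightarrow> f r \<le> g r" and nonneg: "\<And>r. r \<in> {-1<..<1} \<Longrightarrow> 0 \<le> g r"
  shows "expect_r f \<le> expect_r g"
proof (cases "integrable unif f")
  case True
  show ?thesis unfolding expect_r_def
    by (rule integral_mono_AE[OF True g]) (use le in \<open>auto intro: AE_uniform_measureI AE_I2\<close>)
next
  case False
  then have "expect_r f = 0" unfolding expect_r_def by (rule not_integrable_integral_eq)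
  moreover have "0 \<le> expect_r g" unfolding expect_r_def
    by (rule integral_nonneg_AE) (use nonneg in \<open>auto intro: AE_uniform_measureI AE_I2\<close>)
  ultimately show ?thesis by simp
qed

lemma is_norm_real_eq:
  assumes "is_norm_real nrm"
  shows "nrm z = \<bar>z\<bar> * nrm 1" "nrm 1 > 0"
proof -
  show "nrm z = \<bar>z\<bar> * nrm 1"
    using assms unfolding is_norm_real_def by (metis mult.right_neutral)
  have "nrm 1 \<ge> 0" "nrm 1 \<noteq> 0" using assms unfolding is_norm_real_def by auto
  then show "nrm 1 > 0" by simp
qed

lemma soco_costs_lipschitz:
  assumes "soco_costs a b G B c" "a \<le> b"
  shows "G-lipschitz_on {a..b} (c t)"
proof (rule lipschitz_onI)
  have sg: "\<exists>g. \<bar>g\<bar> \<le> G \<and> is_subgradient {a..b} (c t) x g" if "x \<in> {a..b}" for x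
    using assms(1) that unfolding soco_costs_def by blast
  have *: "c t x - c t y \<le> G * \<bar>x - y\<bar>" if xy: "x \<in> {a..b}" "y \<in> {a..b}" for x y
  proof -
    obtain g where g: "\<bar>g\<bar> \<le> G" "is_subgradient {a..b} (c t) x g"
      using sg[OF xy(1)] by blast
    then have "c t x - c t y \<le> g * (x - y)"
      using xy(2) unfolding is_subgradient_def by (force simp: algebra_simps)
    also have "\<dots> \<le> G * \<bar>x - y\<bar>"
      using g(1) abs_ge_self[of "g * (x - y)"] mult_right_mono[OF g(1) abs_ge_zero[of "x - y"]]
      by (simp add: abs_mult)
    finally show ?thesis .
  qed
  fix x y assume "x \<in> {a..b}" "y \<in> {a..b}"
  then show "dist (c t x) (c t y) \<le> G * dist x y"
    using *[of x y] *[of y x] by (simp add: dist_real_def abs_minus_commute)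
next
  obtain g where "\<bar>g\<bar> \<le> G"
    using assms unfolding soco_costs_def by fastforce
  then show "0 \<le> G" by linarith
qed

lemma soco_costsD:
  assumes "soco_costs a b G B c" "x \<in> {a..b}"
  shows "convex_on {a..b} (c t)" "0 \<le> c t x" "c t x \<le> B"
  using assms unfolding soco_costs_def by auto

lemma sum_abs_steps_Suc:
  "(\<Sum>t=1..Suc T. \<bar>y t - (if t = 1 then 0 else y (t - 1))\<bar>) = \<bar>y 1\<bar> + (\<Sum>t=1..T. \<bar>y (t + 1) - y t\<bar>)"
  for y :: "nat \<Rightarrow> real"
  by (induction T) (simp_all add: sum.cl_ivl_Suc)

lemma switching_weight_ratio:
  fixes \<theta> \<alpha> h d :: real
  assumes "\<theta> \<ge> 1" "\<alpha> \<ge> 1" "h \<ge> 0" "d \<ge> 0"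
  shows "(1 + 1 / \<theta>) * (h + \<theta> * d) \<le> (1 + \<theta>) / min \<theta> \<alpha> * (h + \<alpha> * d)"
proof (cases "\<theta> \<le> \<alpha>")
  case True
  have "(1 + 1 / \<theta>) * (h + \<theta> * d) = (1 + \<theta>) / \<theta> * (h + \<theta> * d)"
    using assms by (simp add: field_simps)
  also have "\<dots> \<le> (1 + \<theta>) / \<theta> * (h + \<alpha> * d)"
    using assms True by (intro mult_left_mono add_left_mono mult_right_mono) auto
  finally show ?thesis using True by simp
next
  case False
  have "(1 + 1 / \<theta>) * (h + \<theta> * d) = (1 + \<theta>) / \<theta> * h + (1 + \<theta>) / \<alpha> * (\<alpha> * d)"
    using assms by (simp add: field_simps)
  also have "(1 + \<theta>) / \<theta> * h \<le> (1 + \<theta>) / \<alpha> * h"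
    using assms False by (intro mult_right_mono divide_left_mono) auto
  finally show ?thesis using False by (simp add: distrib_left)
qed

lemma le_OPT_d:
  assumes "a \<le> b" "\<rho> > 0"
    and "\<And>y. y 0 = 0 \<Longrightarrow> \<forall>t\<in>{1..T}. y t \<in> {a..b} \<Longrightarrow>
      C \<le> \<rho> * (\<Sum>t=1..T. c t (y t) + \<alpha> * nrm (y t - y (t - 1))) + K"
  shows "C \<le> \<rho> * OPT_d \<alpha> nrm {a..b} c T + K"
proof -
  have "(C - K) / \<rho> \<le> OPT_d \<alpha> nrm {a..b} c T"
    unfolding OPT_d_def
  proof (rule cInf_greatest)
    show "{\<Sum>t=1..T. c t (y t) + \<alpha> * nrm (y t - y (t - 1)) |y. y 0 = 0 \<and> (\<forall>t\<in>{1..T}. y t \<in> {a..b})} \<noteq> {}"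
      using assms(1) by (auto intro!: exI[of _ "\<lambda>t. if t = 0 then 0 else a"])
  qed (use assms(2,3) in \<open>auto simp: pos_divide_le_eq algebra_simps\<close>)
  then show ?thesis using assms(2) by (simp add: pos_divide_le_eq algebra_simps)
qed

lemma le_OPT_s:
  assumes "a \<le> b" "\<And>z. z \<in> {a..b} \<Longrightarrow> C \<le> (\<Sum>t=1..T. c t z) + K"
  shows "C \<le> OPT_s {a..b} c T + K"
proof -
  have "C - K \<le> OPT_s {a..b} c T"
    unfolding OPT_s_def by (rule cInf_greatest) (use assms in force)+
  then show ?thesis by simp
qed

section \<open>Executions of RBG\<close>

locale rbg_execution =
  fixes a b G B \<theta> :: real and nrm :: "real \<Rightarrow> real" and c :: "nat \<Rightarrow> real \<Rightarrow> real"
    and x :: "real \<Rightarrow> nat \<Rightarrow> real"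
  assumes a_nonneg: "0 \<le> a" and a_le_b: "a \<le> b" and norm: "is_norm_real nrm" and \<theta>: "\<theta> \<ge> 1"
    and costs: "soco_costs a b G B c" and run: "rbg_run (\<lambda>z. \<theta> * nrm z) {a..b} c x"
    and x_measurable: "\<And>t. (\<lambda>r. x r t) \<in> borel_measurable borel"
begin

definition n :: real where "n = nrm 1"

definition s :: real where "s = \<theta> * n"

abbreviation W :: "nat \<Rightarrow> real \<Rightarrow> real" where
  "W \<equiv> rbg_work (\<lambda>z. \<theta> * nrm z) {a..b} c"

lemma n_pos: "n > 0"
  unfolding n_def using is_norm_real_eq(2)[OF norm] .

lemma \<theta>_pos: "\<theta> > 0"
  using \<theta> by simp

lemma s_pos: "s > 0"
  unfolding s_def using n_pos \<theta> by simp

lemma nrm_eq: "nrm z = \<bar>z\<bar> * n"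
  unfolding n_def using is_norm_real_eq(1)[OF norm] .

lemma N_eq: "\<theta> * nrm z = s * \<bar>z\<bar>"
  unfolding s_def by (subst nrm_eq) simp

lemma W_0: "W 0 z = s * \<bar>z\<bar>"
  by (simp only: rbg_work.simps N_eq)

lemma B_nonneg: "B \<ge> 0"
  using soco_costsD(2,3)[OF costs, of a 0] a_le_b by simp

lemma G_nonneg: "G \<ge> 0"
  using lipschitz_on_nonneg[OF soco_costs_lipschitz[OF costs a_le_b]] .

lemma work_stepI: "inf_convolution a b s (W t) (c (Suc t))" if "s-lipschitz_on {a..b} (W t)" "convex_on {a..b} (W t)"
  by (rule inf_convolution.intro[OF a_le_b s_pos that
      lipschitz_on_continuous_on[OF soco_costs_lipschitz[OF costs a_le_b]]
      soco_costsD(1)[OF costs] soco_costsD(2)[OF costs]])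
    (use a_le_b in auto)

lemma W_Suc_conv:
  assumes "inf_convolution a b s (W t) (c (Suc t))"
  shows "W (Suc t) = inf_convolution.conv a b s (W t) (c (Suc t))"
  unfolding inf_convolution.conv_def[OF assms] by (rule ext) (simp only: rbg_work.simps N_eq)

lemma work_step: "inf_convolution a b s (W t) (c (Suc t))"
proof -
  have "s-lipschitz_on {a..b} (W t) \<and> convex_on {a..b} (W t)"
  proof (induction t)
    case 0
    have "s-lipschitz_on {a..b} (\<lambda>z. s * \<bar>z\<bar>)"
    proof (rule lipschitz_onI)
      fix u w :: real
      have "\<bar>s * \<bar>u\<bar> - s * \<bar>w\<bar>\<bar> = s * \<bar>\<bar>u\<bar> - \<bar>w\<bar>\<bar>"
        using s_pos by (simp add: abs_mult flip: right_diff_distrib)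
      also have "\<dots> \<le> s * \<bar>u - w\<bar>"
        using s_pos abs_triangle_ineq3 by (intro mult_left_mono) auto
      finally show "dist (s * \<bar>u\<bar>) (s * \<bar>w\<bar>) \<le> s * dist u w"
        by (simp add: dist_real_def)
    qed (use s_pos in simp)
    moreover have "convex_on {a..b} (\<lambda>z. s * dist 0 z)"
      using s_pos by (intro convex_on_cmul convex_on_dist) auto
    then have "convex_on {a..b} (\<lambda>z. s * \<bar>z\<bar>)"
      by (simp add: dist_real_def)
    ultimately show ?case unfolding W_0 by blast
  next
    case (Suc t)
    then have step: "inf_convolution a b s (W t) (c (Suc t))"
      by (intro work_stepI) auto
    interpret inf_convolution a b s "W t" "c (Suc t)"
      by (rule step)
    show ?case
      unfolding W_Suc_conv[OF step] using lipschitz_on_conv convex_on_conv by blast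
  qed
  then show ?thesis by (intro work_stepI) auto
qed

sublocale step: inf_convolution a b s "W t" "c (Suc t)" for t
  by (rule work_step)

lemma W_Suc: "W (Suc t) = step.conv t"
  by (rule W_Suc_conv[OF work_step])

text \<open>On \<open>F \<subseteq> \<real>\<^sup>+\<close> the randomised term \<open>r N(z)\<close> of \<open>Y\<^sup>t\<close> is linear in \<open>z\<close>.\<close>
lemma x_tilted_argmin:
  assumes "t \<ge> 1" "r \<in> {-1<..<1}"
  shows "tilted_argmin (W (t - 1)) {a..b} (r * s) (x r t)"
proof -
  have x: "x r t \<in> {a..b}"
    and min: "\<forall>z\<in>{a..b}. W (t - 1) (x r t) + r * (\<theta> * nrm (x r t)) \<le> W (t - 1) z + r * (\<theta> * nrm z)"
    using run assms unfolding rbg_run_def by blast+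
  have "\<bar>z\<bar> = z" if "z \<in> {a..b}" for z
    using a_nonneg that by auto
  with x min show ?thesis
    unfolding tilted_argmin_def N_eq by (simp add: mult.assoc)
qed

lemma x_in: "t \<ge> 1 \<Longrightarrow> r \<in> {-1<..<1} \<Longrightarrow> x r t \<in> {a..b}"
  using x_tilted_argmin unfolding tilted_argmin_def by blast

text \<open>This minimum value grows by at least the hitting cost in every step.\<close>
definition tilted_value :: "nat \<Rightarrow> real \<Rightarrow> real" where
  "tilted_value t r = W t (x r (Suc t)) + r * s * x r (Suc t)"

lemma hitting_cost_le_tilted_value_increment:
  assumes r: "r \<in> {-1<..<1}"
  shows "c (Suc t) (x r (Suc (Suc t))) \<le> tilted_value (Suc t) r - tilted_value t r"
proof -
  have new: "tilted_argmin (step.conv t) {a..b} (r * s) (x r (Suc (Suc t)))"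
    using x_tilted_argmin[of "Suc (Suc t)" r] r unfolding W_Suc[symmetric] by (simp del: rbg_work.simps)
  have old: "tilted_argmin (W t) {a..b} (r * s) (x r (Suc t))"
    using x_tilted_argmin[of "Suc t" r] r by simp
  have "step.conv t (x r (Suc (Suc t))) = W t (x r (Suc (Suc t))) + c (Suc t) (x r (Suc (Suc t)))"
    by (rule step.conv_eq_at_tilted_argmin[OF _ new]) (use r in auto)
  moreover have "W t (x r (Suc t)) + r * s * x r (Suc t) \<le> W t (x r (Suc (Suc t))) + r * s * x r (Suc (Suc t))"
    using old new unfolding tilted_argmin_def by blast
  ultimately show ?thesis unfolding tilted_value_def W_Suc by simp
qed

lemma hitting_cost_le:
  assumes r: "r \<in> {-1<..<1}"
  shows "(\<Sum>t=1..T. c t (x r (t + 1))) \<le> W T a + s * b"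
proof -
  have "(\<Sum>t=1..T. c t (x r (t + 1))) \<le> tilted_value T r - tilted_value 0 r"
  proof (induction T)
    case (Suc T)
    then show ?case
      using hitting_cost_le_tilted_value_increment[OF r, of T] by (simp add: sum.cl_ivl_Suc)
  qed simp
  moreover have "0 \<le> tilted_value 0 r"
  proof -
    have x1: "0 \<le> x r 1" using x_in[of 1 r] r a_nonneg by auto
    then have "0 \<le> (1 + r) * (s * x r 1)" using s_pos r by simp
    with x1 show ?thesis
      unfolding tilted_value_def W_0 by (simp add: algebra_simps)
  qed
  moreover have "tilted_value T r \<le> W T a + r * s * a"
    using x_tilted_argmin[of "Suc T" r] r a_le_b unfolding tilted_value_def tilted_argmin_def by auto
  moreover have "r * s * a \<le> s * b"
    using r s_pos a_nonneg a_le_b mult_mono[of r 1 "s * a" "s * b"] by (simp add: mult.assoc)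
  ultimately show ?thesis by linarith
qed

definition path_cost :: "nat \<Rightarrow> (nat \<Rightarrow> real) \<Rightarrow> real" where
  "path_cost T y = (\<Sum>t=1..T. c t (y t) + s * \<bar>y t - y (t - 1)\<bar>)"

lemma W_le_path_cost:
  assumes "y 0 = 0" "\<forall>t\<in>{1..T}. y t \<in> {a..b}"
  shows "W T z \<le> path_cost T y + s * \<bar>z - y T\<bar>"
  using assms(2)
proof (induction T arbitrary: z)
  case 0
  then show ?case by (simp add: path_cost_def assms(1) N_eq)
next
  case (Suc T)
  have "y (Suc T) \<in> {a..b}" using Suc.prems by auto
  then have "W (Suc T) z \<le> W T (y (Suc T)) + c (Suc T) (y (Suc T)) + s * \<bar>z - y (Suc T)\<bar>"
    unfolding W_Suc by (rule step.conv_le)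
  moreover have "W T (y (Suc T)) \<le> path_cost T y + s * \<bar>y (Suc T) - y T\<bar>"
    using Suc by auto
  ultimately show ?case
    unfolding path_cost_def by (simp add: sum.cl_ivl_Suc)
qed

definition movement :: "real \<Rightarrow> nat \<Rightarrow> real" where
  "movement r T = (\<Sum>t=1..T. \<bar>x r (t + 1) - x r t\<bar>)"

lemma movement_nonneg: "0 \<le> movement r T"
  unfolding movement_def by (rule sum_nonneg) simp

lemma movement_step_integral:
  obtains I where "((\<lambda>r. \<bar>x r (Suc (Suc t)) - x r (Suc t)\<bar>) has_integral I) {-1..1}"
    "I \<le> (W (Suc t) a - W t a + W (Suc t) b - W t b) / s"
proof -
  obtain v where v: "v \<in> {a..b}" "antimono_on {a..v} (\<lambda>z. step.conv t z - W t z)"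
    "mono_on {v..b} (\<lambda>z. step.conv t z - W t z)"
    by (rule step.increment_valley)
  have old: "tilted_argmin (W t) {a..b} (r * s) (x r (Suc t))"
    and new: "tilted_argmin (step.conv t) {a..b} (r * s) (x r (Suc (Suc t)))" if "r \<in> {-1<..<1}" for r
    using x_tilted_argmin[of "Suc t" r] x_tilted_argmin[of "Suc (Suc t)" r] that
    unfolding W_Suc[symmetric] by (simp_all del: rbg_work.simps)
  obtain I where "((\<lambda>r. \<bar>x r (Suc (Suc t)) - x r (Suc t)\<bar>) has_integral I) {-1..1}"
    "I \<le> (step.conv t a - W t a + step.conv t b - W t b) / s"
    by (rule has_integral_tilted_argmin_distance[OF s_pos step.f_lipschitz step.f_convex
          step.lipschitz_on_conv step.convex_on_conv step.conv_ge[OF v(1)] v old new])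
  with that show ?thesis unfolding W_Suc by blast
qed

lemma movement_integral:
  "(\<lambda>r. movement r T) integrable_on {-1..1} \<and>
   integral {-1..1} (\<lambda>r. movement r T) \<le> (W T a - W 0 a + W T b - W 0 b) / s"
proof (induction T)
  case 0
  show ?case by (simp add: movement_def integrable_0)
next
  case (Suc T)
  obtain I where I: "((\<lambda>r. \<bar>x r (Suc (Suc T)) - x r (Suc T)\<bar>) has_integral I) {-1..1}"
    "I \<le> (W (Suc T) a - W T a + W (Suc T) b - W T b) / s"
    by (rule movement_step_integral)
  have "movement r (Suc T) = movement r T + \<bar>x r (Suc (Suc T)) - x r (Suc T)\<bar>" for r
    unfolding movement_def by (simp add: sum.cl_ivl_Suc)
  then have "((\<lambda>r. movement r (Suc T)) has_integral (integral {-1..1} (\<lambda>r. movement r T) + I)) {-1..1}"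
    using has_integral_add[OF integrable_integral I(1)] Suc.IH by simp
  moreover have "(W T a - W 0 a + W T b - W 0 b) / s + (W (Suc T) a - W T a + W (Suc T) b - W T b) / s
      = (W (Suc T) a - W 0 a + W (Suc T) b - W 0 b) / s"
    by (simp add: add_divide_distrib[symmetric])
  ultimately show ?case
    using Suc.IH I(2) by (auto simp: has_integral_iff)
qed

lemma expected_movement:
  "integrable unif (\<lambda>r. movement r T)" "expect_r (\<lambda>r. movement r T) \<le> (W T a + W T b) / (2 * s)"
proof -
  have [measurable]: "(\<lambda>r. movement r T) \<in> borel_measurable borel"
    unfolding movement_def using x_measurable by measurable
  have "\<bar>movement r T\<bar> \<le> real T * b" if r: "r \<in> {-1<..<1}" for r
  proof -
    have "\<bar>x r (t + 1) - x r t\<bar> \<le> b" if "t \<in> {1..T}" for t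
      using x_in[of t r] x_in[of "t + 1" r] r that a_nonneg by auto
    then have "movement r T \<le> (\<Sum>t=1..T. b)"
      unfolding movement_def by (rule sum_mono)
    with movement_nonneg[of r T] show ?thesis by simp
  qed
  note bounded = expect_r_eq_integral[of "\<lambda>r. movement r T", OF _ this]
  show "integrable unif (\<lambda>r. movement r T)" by (rule bounded(1)) measurable
  have "expect_r (\<lambda>r. movement r T) = integral {-1..1} (\<lambda>r. movement r T) / 2"
    by (rule bounded(2)) measurable
  also have "\<dots> \<le> (W T a - W 0 a + W T b - W 0 b) / s / 2"
    using movement_integral[of T] by (intro divide_right_mono) auto
  also have "\<dots> \<le> (W T a + W T b) / (2 * s)"
    using W_0[of a] W_0[of b] s_pos by (simp add: field_simps)
  finally show "expect_r (\<lambda>r. movement r T) \<le> (W T a + W T b) / (2 * s)" .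
qed

lemma W_nonneg: "z \<in> {a..b} \<Longrightarrow> 0 \<le> W t z"
proof (induction t)
  case 0
  then show ?case using s_pos by (simp add: N_eq)
next
  case (Suc t)
  have "W t z \<le> step.conv t z" using Suc.prems by (rule step.conv_ge)
  with Suc.IH[OF Suc.prems] show ?case unfolding W_Suc by linarith
qed

lemma abs_x_le: "t \<ge> 1 \<Longrightarrow> r \<in> {-1<..<1} \<Longrightarrow> \<bar>x r t\<bar> \<le> b"
  using x_in a_nonneg by fastforce

lemma switching_cost_lookahead_le:
  assumes r: "r \<in> {-1<..<1}"
  shows "(\<Sum>t=1..T. nrm (x r (t + 1) - (if t = 1 then 0 else x r (t + 1 - 1)))) \<le> n * (b + movement r T)"
proof -
  have "\<bar>x r (t + 1) - (if t = 1 then 0 else x r t)\<bar> \<le> \<bar>x r (t + 1) - x r t\<bar> + (if t = 1 then b else 0)"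
    if "t \<in> {1..T}" for t
    using abs_x_le[of 1 r] r by auto
  then have "(\<Sum>t=1..T. \<bar>x r (t + 1) - (if t = 1 then 0 else x r t)\<bar>)
      \<le> (\<Sum>t=1..T. \<bar>x r (t + 1) - x r t\<bar> + (if t = 1 then b else 0))"
    by (rule sum_mono)
  also have "\<dots> = movement r T + (\<Sum>t=1..T. if t = 1 then b else 0)"
    unfolding movement_def by (rule sum.distrib)
  also have "(\<Sum>t=1..T. if t = 1 then b else 0) \<le> b"
    using a_nonneg a_le_b by (simp add: sum.delta)
  finally show ?thesis
    unfolding add_diff_cancel_right' using n_pos by (simp add: nrm_eq mult.commute flip: sum_distrib_left)
qed

lemma switching_cost_le:
  assumes r: "r \<in> {-1<..<1}"
  shows "(\<Sum>t=1..T. nrm (x r t - (if t = 1 then 0 else x r (t - 1)))) \<le> n * (b + movement r T)"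
proof -
  have "(\<Sum>t=1..T. \<bar>x r t - (if t = 1 then 0 else x r (t - 1))\<bar>) \<le> b + movement r T"
  proof (cases T)
    case 0
    then show ?thesis using a_nonneg a_le_b by (simp add: movement_def)
  next
    case (Suc T')
    have "movement r T' \<le> movement r T"
      unfolding movement_def Suc by (intro sum_mono2) auto
    then show ?thesis
      unfolding Suc sum_abs_steps_Suc using abs_x_le[of 1 r] r by (simp add: movement_def)
  qed
  then show ?thesis
    using n_pos by (simp add: nrm_eq mult.commute flip: sum_distrib_left)
qed

lemma hitting_cost_no_lookahead_le:
  assumes r: "r \<in> {-1<..<1}"
  shows "(\<Sum>t=1..T. c t (x r t)) \<le> (\<Sum>t=1..T. c t (x r (t + 1))) + G * movement r T"
proof -
  have "c t (x r t) \<le> c t (x r (t + 1)) + G * \<bar>x r (t + 1) - x r t\<bar>" if "t \<in> {1..T}" for t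
    using lipschitz_on_normD[OF soco_costs_lipschitz[OF costs a_le_b], of "x r t" "x r (t + 1)" t]
      x_in[of t r] x_in[of "t + 1" r] r that by (auto simp: abs_minus_commute)
  then have "(\<Sum>t=1..T. c t (x r t)) \<le> (\<Sum>t=1..T. c t (x r (t + 1)) + G * \<bar>x r (t + 1) - x r t\<bar>)"
    by (rule sum_mono)
  then show ?thesis
    unfolding movement_def by (simp add: sum.distrib sum_distrib_left)
qed

lemma lookahead_cost_le_movement:
  assumes r: "r \<in> {-1<..<1}"
  shows "(\<Sum>t=1..T. c t (x r (t + 1)) + 1 * nrm (x r (t + 1) - (if t = 1 then 0 else x r (t + 1 - 1))))
    \<le> W T a + s * b + n * b + n * movement r T"
proof -
  have "(\<Sum>t=1..T. c t (x r (t + 1)) + 1 * nrm (x r (t + 1) - (if t = 1 then 0 else x r (t + 1 - 1))))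
      = (\<Sum>t=1..T. c t (x r (t + 1))) + (\<Sum>t=1..T. nrm (x r (t + 1) - (if t = 1 then 0 else x r (t + 1 - 1))))"
    by (simp add: sum.distrib)
  with hitting_cost_le[OF r, of T] switching_cost_lookahead_le[OF r, of T] show ?thesis
    by (simp add: algebra_simps)
qed

lemma cost_le_movement:
  assumes r: "r \<in> {-1<..<1}"
  shows "(\<Sum>t=1..T. c t (x r t) + 1 * nrm (x r t - (if t = 1 then 0 else x r (t - 1))))
    \<le> W T a + s * b + n * b + (G + n) * movement r T"
proof -
  have "(\<Sum>t=1..T. c t (x r t) + 1 * nrm (x r t - (if t = 1 then 0 else x r (t - 1))))
      = (\<Sum>t=1..T. c t (x r t)) + (\<Sum>t=1..T. nrm (x r t - (if t = 1 then 0 else x r (t - 1))))"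
    by (simp add: sum.distrib)
  with hitting_cost_no_lookahead_le[OF r, of T] hitting_cost_le[OF r, of T] switching_cost_le[OF r, of T]
  show ?thesis by (simp add: algebra_simps)
qed

lemma cost_lookahead_le:
  "cost_la 1 1 nrm c T x \<le> W T a + s * b + n * b + n * ((W T a + W T b) / (2 * s))"
proof -
  have "cost_la 1 1 nrm c T x \<le> expect_r (\<lambda>r. (W T a + s * b + n * b) + n * movement r T)"
    unfolding cost_la_def
    by (rule expect_r_le[OF expect_r_affine(1)[OF expected_movement(1)] lookahead_cost_le_movement])
      (use W_nonneg[of a T] movement_nonneg a_le_b a_nonneg s_pos n_pos in simp_all)
  also have "\<dots> = (W T a + s * b + n * b) + n * expect_r (\<lambda>r. movement r T)"
    by (rule expect_r_affine(2)[OF expected_movement(1)])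
  also have "\<dots> \<le> (W T a + s * b + n * b) + n * ((W T a + W T b) / (2 * s))"
    using expected_movement(2) n_pos by (intro add_left_mono mult_left_mono) auto
  finally show ?thesis .
qed

lemma cost_le:
  "cost_la 0 1 nrm c T x \<le> W T a + s * b + n * b + (G + n) * ((W T a + W T b) / (2 * s))"
proof -
  have "cost_la 0 1 nrm c T x \<le> expect_r (\<lambda>r. (W T a + s * b + n * b) + (G + n) * movement r T)"
    unfolding cost_la_def add_0_right
    by (rule expect_r_le[OF expect_r_affine(1)[OF expected_movement(1)] cost_le_movement])
      (use W_nonneg[of a T] movement_nonneg a_le_b a_nonneg s_pos n_pos G_nonneg in simp_all)
  also have "\<dots> = (W T a + s * b + n * b) + (G + n) * expect_r (\<lambda>r. movement r T)"
    by (rule expect_r_affine(2)[OF expected_movement(1)])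
  also have "\<dots> \<le> (W T a + s * b + n * b) + (G + n) * ((W T a + W T b) / (2 * s))"
    using expected_movement(2) n_pos G_nonneg by (intro add_left_mono mult_left_mono) auto
  finally show ?thesis .
qed

lemma W_le_path_cost_bound:
  assumes "y 0 = 0" "\<forall>t\<in>{1..T}. y t \<in> {a..b}" "z \<in> {a..b}"
  shows "W T z \<le> path_cost T y + s * b"
proof -
  have "y T \<in> {a..b} \<or> y T = 0" using assms(1,2) by (cases T) auto
  then have "\<bar>z - y T\<bar> \<le> b" using assms(3) a_nonneg by auto
  then have "s * \<bar>z - y T\<bar> \<le> s * b"
    using s_pos by (intro mult_left_mono) auto
  with W_le_path_cost[OF assms(1,2), of z] show ?thesis by linarith
qed

lemma path_cost_static:
  assumes "z \<in> {a..b}"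
  shows "path_cost T (\<lambda>t. if t = 0 then 0 else z) \<le> (\<Sum>t=1..T. c t z) + s * b"
proof -
  have "path_cost T (\<lambda>t. if t = 0 then 0 else z) = (\<Sum>t=1..T. c t z + (if t = 1 then s * \<bar>z\<bar> else 0))"
    unfolding path_cost_def by (rule sum.cong) auto
  also have "\<dots> = (\<Sum>t=1..T. c t z) + (if 1 \<le> T then s * \<bar>z\<bar> else 0)"
    by (simp add: sum.distrib sum.delta)
  also have "\<dots> \<le> (\<Sum>t=1..T. c t z) + s * b"
    using assms a_nonneg s_pos by auto
  finally show ?thesis .
qed

lemma path_cost_le_weighted_cost:
  assumes "\<alpha> \<ge> 1" "\<forall>t\<in>{1..T}. y t \<in> {a..b}"
  shows "(1 + 1 / \<theta>) * path_cost T y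
    \<le> (1 + \<theta>) / min \<theta> \<alpha> * (\<Sum>t=1..T. c t (y t) + \<alpha> * nrm (y t - y (t - 1)))"
proof -
  have "(1 + 1 / \<theta>) * (c t (y t) + s * \<bar>y t - y (t - 1)\<bar>)
      \<le> (1 + \<theta>) / min \<theta> \<alpha> * (c t (y t) + \<alpha> * nrm (y t - y (t - 1)))" if "t \<in> {1..T}" for t
    using switching_weight_ratio[OF \<theta> assms(1), of "c t (y t)" "\<bar>y t - y (t - 1)\<bar> * n"]
      soco_costsD(2)[OF costs] assms(2) that n_pos
    by (simp add: s_def nrm_eq mult.assoc mult.commute[of n])
  then have "(\<Sum>t=1..T. (1 + 1 / \<theta>) * (c t (y t) + s * \<bar>y t - y (t - 1)\<bar>))
      \<le> (\<Sum>t=1..T. (1 + \<theta>) / min \<theta> \<alpha> * (c t (y t) + \<alpha> * nrm (y t - y (t - 1))))"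
    by (rule sum_mono)
  then show ?thesis
    unfolding path_cost_def by (simp only: sum_distrib_left)
qed

lemma competitive_bound:
  assumes "\<alpha> \<ge> 1"
  shows "cost_la 1 1 nrm c T x \<le> (1 + \<theta>) / min \<theta> \<alpha> * OPT_d \<alpha> nrm {a..b} c T + 2 * (s + n) * b"
proof (rule le_OPT_d[OF a_le_b])
  show "(1 + \<theta>) / min \<theta> \<alpha> > 0" using \<theta> assms by simp
  fix y assume y: "y 0 = 0" "\<forall>t\<in>{1..T}. y t \<in> {a..b}"
  define P where "P = path_cost T y"
  have W: "W T a \<le> P + s * b" "W T b \<le> P + s * b"
    unfolding P_def using W_le_path_cost_bound[OF y] a_le_b by auto
  have "n * ((W T a + W T b) / (2 * s)) \<le> n * ((2 * P + 2 * s * b) / (2 * s))"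
    using W n_pos s_pos by (intro mult_left_mono divide_right_mono) auto
  also have "\<dots> = P / \<theta> + n * b"
    unfolding s_def using n_pos \<theta>_pos by (simp add: field_simps)
  finally have "cost_la 1 1 nrm c T x \<le> (1 + 1 / \<theta>) * P + 2 * (s + n) * b"
    using cost_lookahead_le[of T] W by (simp add: algebra_simps)
  then show "cost_la 1 1 nrm c T x
      \<le> (1 + \<theta>) / min \<theta> \<alpha> * (\<Sum>t=1..T. c t (y t) + \<alpha> * nrm (y t - y (t - 1))) + 2 * (s + n) * b"
    using path_cost_le_weighted_cost[OF assms y(2)] unfolding P_def by linarith
qed

lemma regret_against_point:
  assumes z: "z \<in> {a..b}"
  shows "cost_la 0 1 nrm c T x
    \<le> (\<Sum>t=1..T. c t z) + (4 * n * b + 2 * (G + n) * b + (G / n + 1) * B) * max (real T / \<theta>) \<theta>"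
proof -
  define M where "M = max (real T / \<theta>) \<theta>"
  have M: "\<theta> \<le> M" "real T / \<theta> \<le> M" "1 \<le> M" unfolding M_def using \<theta> by auto
  define Cs where "Cs = (\<Sum>t=1..T. c t z)"
  have "Cs \<le> real T * B"
    unfolding Cs_def using sum_mono[of "{1..T}" "\<lambda>t. c t z" "\<lambda>_. B"] soco_costsD(3)[OF costs z] by simp
  have W: "W T w \<le> Cs + 2 * s * b" if "w \<in> {a..b}" for w
    using W_le_path_cost_bound[of "\<lambda>t. if t = 0 then 0 else z" T w] path_cost_static[OF z, of T] z that
    unfolding Cs_def by auto
  have "(G + n) * ((W T a + W T b) / (2 * s)) \<le> (G + n) * ((2 * Cs + 4 * s * b) / (2 * s))"
    using W[of a] W[of b] a_le_b G_nonneg n_pos s_pos by (intro mult_left_mono divide_right_mono) auto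
  also have "\<dots> = (G / n + 1) * (Cs / \<theta>) + 2 * (G + n) * b"
    unfolding s_def using n_pos \<theta>_pos by (simp add: field_simps)
  also have "Cs / \<theta> \<le> B * M"
  proof -
    have "Cs / \<theta> \<le> real T * B / \<theta>"
      using \<open>Cs \<le> real T * B\<close> \<theta>_pos by (simp add: divide_right_mono)
    also have "\<dots> = B * (real T / \<theta>)" by simp
    also have "\<dots> \<le> B * M" using M(2) B_nonneg by (rule mult_left_mono)
    finally show ?thesis .
  qed
  finally have "cost_la 0 1 nrm c T x \<le> Cs + 3 * s * b + n * b + 2 * (G + n) * b + (G / n + 1) * (B * M)"
    using cost_le[of T] W[of a] a_le_b G_nonneg n_pos by (simp add: mult_left_mono)
  moreover have "3 * s * b \<le> 3 * n * b * M" "n * b \<le> n * b * M" "2 * (G + n) * b \<le> 2 * (G + n) * b * M"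
    using mult_left_mono[OF M(1), of "3 * n * b"] mult_left_mono[OF M(3), of "n * b"]
      mult_left_mono[OF M(3), of "2 * (G + n) * b"] n_pos G_nonneg a_nonneg a_le_b
    unfolding s_def by (simp_all add: algebra_simps)
  ultimately show ?thesis
    unfolding Cs_def M_def by (simp add: algebra_simps)
qed

lemma regret_bound:
  "cost_la 0 1 nrm c T x - OPT_s {a..b} c T
    \<le> (4 * n * b + 2 * (G + n) * b + (G / n + 1) * B) * max (real T / \<theta>) \<theta>"
proof -
  have "cost_la 0 1 nrm c T x
      \<le> OPT_s {a..b} c T + (4 * n * b + 2 * (G + n) * b + (G / n + 1) * B) * max (real T / \<theta>) \<theta>"
    by (rule le_OPT_s[OF a_le_b regret_against_point])
  then show ?thesis by simp
qed

end

lemma rbg_competitive_ratio: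
  assumes "0 \<le> xL" "xL \<le> xH" "is_norm_real nrm" "\<theta> \<ge> 1" "\<alpha> \<ge> 1"
    and "soco_costs xL xH G B c" "rbg_run (\<lambda>z. \<theta> * nrm z) {xL..xH} c x"
    and "\<forall>t. (\<lambda>r. x r t) \<in> borel_measurable borel"
  shows "cost_la 1 1 nrm c T x
    \<le> (1 + \<theta>) / min \<theta> \<alpha> * OPT_d \<alpha> nrm {xL..xH} c T + 2 * (\<theta> * nrm 1 + nrm 1) * xH"
proof -
  interpret rbg_execution xL xH G B \<theta> nrm c x
    using assms by unfold_locales auto
  show ?thesis using competitive_bound[OF assms(5)] unfolding s_def n_def .
qed

lemma rbg_regret:
  assumes "0 \<le> xL" "xL \<le> xH" "is_norm_real nrm" "\<theta> \<ge> 1"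
    and "soco_costs xL xH G B c" "rbg_run (\<lambda>z. \<theta> * nrm z) {xL..xH} c x"
    and "\<forall>t. (\<lambda>r. x r t) \<in> borel_measurable borel"
  shows "cost_la 0 1 nrm c T x - OPT_s {xL..xH} c T
    \<le> (4 * nrm 1 * xH + 2 * (G + nrm 1) * xH + (G / nrm 1 + 1) * B) * max (real T / \<theta>) \<theta>"
proof -
  interpret rbg_execution xL xH G B \<theta> nrm c x
    using assms by unfold_locales auto
  show ?thesis using regret_bound unfolding n_def .
qed

theorem theorem4:
  fixes xL xH G B :: real and nrm :: "real \<Rightarrow> real"
  assumes "0 \<le> xL" and "xL \<le> xH" and "is_norm_real nrm"
  shows
    "(\<forall>\<theta>\<ge>1. \<forall>\<alpha>\<ge>1. \<exists>K. \<forall>T c x.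
        soco_costs xL xH G B c \<longrightarrow>
        rbg_run (\<lambda>z. \<theta> * nrm z) {xL..xH} c x \<longrightarrow>
        (\<forall>t. (\<lambda>r. x r t) \<in> borel_measurable borel) \<longrightarrow>
        cost_la 1 1 nrm c T x
          \<le> (1 + \<theta>) / min \<theta> \<alpha> * OPT_d \<alpha> nrm {xL..xH} c T + K)
   \<and> (\<exists>K. \<forall>\<theta>\<ge>1. \<forall>T c x.
        soco_costs xL xH G B c \<longrightarrow>
        rbg_run (\<lambda>z. \<theta> * nrm z) {xL..xH} c x \<longrightarrow>
        (\<forall>t. (\<lambda>r. x r t) \<in> borel_measurable borel) \<longrightarrow>
        cost_la 0 1 nrm c T x - OPT_s {xL..xH} c T \<le> K * max (real T / \<theta>) \<theta>)"
  using rbg_competitive_ratio[OF assms] rbg_regret[OF assms] by blast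

end
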